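(* Let $r>0$ and let two points be chosen independently and uniformly at random in the equilateral triangle $\mathcal P_{3,r}$ (circumradius $r$, side length $\sqrt3\,r$). The density of their distance $t$ is $g(t)=0$ for $t\notin[0,\sqrt3\,r)$ and $$g(t)=\frac{2t}{A}\Big[\pi+\frac uA\big(\phi(t)-t\big)\Big]\quad(0\le t<\sqrt3\,r),\qquad u=3\sqrt3\,r,\ A=\tfrac34\sqrt3\,r^2,$$ where $$\phi(t)=\frac{(3\sqrt3+2\pi)t^2}{36r}\quad\text{for }0\le t<\tfrac{3r}{2},$$ $$\phi(t)=\frac32\Big[t\sqrt{1-\Big(\frac{3r}{2t}\Big)^2}-\frac{\pi r}{2}\Big]+\Big(\frac{1}{4\sqrt3}-\frac{\pi}{9}\Big)\frac{t^2}{r}+\Big(\frac{3r}{2}+\frac{t^2}{3r}\Big)\arcsin\frac{3r}{2t}\quad\text{for }\tfrac{3r}{2}\le t<\sqrt3\,r.$$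
   Context: $\mathcal P_{3,r}$ denotes the equilateral triangle whose circumscribed circle has radius $r>0$; $u$ and $A$ are its perimeter and area. *)

theory Defs
  imports "HOL-Probability.Probability"
begin

definition tri3 :: "real \<Rightarrow> (real \<times> real) set" where
  "tri3 r = convex hull {(r, 0), (-r/2, sqrt 3 * r / 2), (-r/2, - sqrt 3 * r / 2)}"

definition tri3_perimeter :: "real \<Rightarrow> real" where
  "tri3_perimeter r = 3 * sqrt 3 * r"

definition tri3_area :: "real \<Rightarrow> real" where
  "tri3_area r = 3/4 * sqrt 3 * r^2"

definition tri3_phi :: "real \<Rightarrow> real \<Rightarrow> real" where
  "tri3_phi r t =
     (if t < 3*r/2 then (3 * sqrt 3 + 2*pi) * t^2 / (36 * r)
      else 3/2 * (t * sqrt (1 - (3*r/(2*t))^2) - pi*r/2)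
           + (1/(4 * sqrt 3) - pi/9) * t^2 / r
           + (3*r/2 + t^2/(3*r)) * arcsin (3*r/(2*t)))"

definition tri3_density :: "real \<Rightarrow> real \<Rightarrow> real" where
  "tri3_density r t =
     (if 0 \<le> t \<and> t < sqrt 3 * r then
        2*t / tri3_area r * (pi + tri3_perimeter r / tri3_area r * (tri3_phi r t - t))
      else 0)"

definition tri3_pair_space :: "real \<Rightarrow> ((real \<times> real) \<times> (real \<times> real)) measure" where
  "tri3_pair_space r =
     pair_measure (uniform_measure lborel (tri3 r)) (uniform_measure lborel (tri3 r))"

end

theory Submission
  imports Defs
begin

(*
  Idea of the proof.
  (1) For any body T of finite positive volume A, P(|p - q| <= x) equals
      A^-2 * (integral over |h| <= x of the covariogram |T \<inter> (T - h)|)   [Fubini + translation].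
  (2) Writing T as the intersection of three half-planes {edge_i <= r/2}, each translate
      intersection T \<inter> (T - h) is again such an equilateral triangle; its area is
      (max 0 (3r/2 - g h))^2 / sqrt 3, where g h is the sum of the positive parts of the
      three edge functionals at h (the gauge of the hexagonal difference body T - T).
  (3) The covariogram is invariant under the rotation by 120 degrees, which is measure
      preserving (a product of three shears); hence the h-integral is three times the
      integral over the sector where the first edge functional dominates, on which
      g h = |h_1|.  Slicing that sector along h_1 = a reduces it to a one-dimensional
      integral over a in [0, min (3r/2) x].
  (4) That integral is evaluated in closed form by the fundamental theorem of calculus;
      the result is the distribution function tri3_cdf, whose derivative is the claimed
      density.  The density integrates to tri3_cdf, is non-negative because tri3_cdf is
      monotone, and the two distributions agree by uniqueness of distribution functions.
*)

section \<open>Distance of two uniform points and the covariogram\<close>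

definition covariogram :: "'a::euclidean_space set \<Rightarrow> 'a \<Rightarrow> ennreal" where
  "covariogram T h = emeasure lborel {p. p \<in> T \<and> p + h \<in> T}"

lemma covariogram_nn_integral:
  assumes [measurable]: "T \<in> sets borel"
  shows "covariogram T h = (\<integral>\<^sup>+p. indicator T p * indicator T (p + h) \<partial>lborel)"
proof -
  have "{p. p \<in> T \<and> p + h \<in> T} \<in> sets lborel" by measurable
  then have "covariogram T h = (\<integral>\<^sup>+p. indicator {p. p \<in> T \<and> p + h \<in> T} p \<partial>lborel)"
    unfolding covariogram_def by (rule nn_integral_indicator[symmetric])
  also have "\<dots> = (\<integral>\<^sup>+p. indicator T p * indicator T (p + h) \<partial>lborel)"
    by (intro nn_integral_cong) (simp add: indicator_def)
  finally show ?thesis .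
qed

lemma nn_integral_lborel_translate:
  fixes g :: "'a::euclidean_space \<Rightarrow> ennreal"
  assumes [measurable]: "g \<in> borel_measurable borel"
  shows "(\<integral>\<^sup>+q. g q \<partial>lborel) = (\<integral>\<^sup>+h. g (p + h) \<partial>lborel)"
proof -
  have "(\<integral>\<^sup>+q. g q \<partial>lborel) = (\<integral>\<^sup>+q. g q \<partial>distr lborel borel ((+) p))"
    by (simp add: lborel_distr_plus)
  also have "\<dots> = (\<integral>\<^sup>+h. g (p + h) \<partial>lborel)"
    by (subst nn_integral_distr) auto
  finally show ?thesis .
qed

lemma uniform_measure_lborel_density:
  assumes [measurable]: "T \<in> sets borel" and A: "emeasure lborel T = ennreal A" "0 < A"
  shows "uniform_measure lborel T = density lborel (\<lambda>p. ennreal (1/A) * indicator T p)"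
  unfolding uniform_measure_def A
proof (rule density_cong)
  have "1 / ennreal A = ennreal (1/A)" using divide_ennreal[of 1 A] A by simp
  then show "AE x in lborel. indicator T x / ennreal A = ennreal (1/A) * indicator T x"
    using A by (auto simp: indicator_def)
qed measurable

lemma uniform_pair_dist_le:
  fixes T :: "'a::euclidean_space set"
  assumes T[measurable]: "T \<in> sets borel" and A: "emeasure lborel T = ennreal A" "0 < A"
  shows "emeasure (uniform_measure lborel T \<Otimes>\<^sub>M uniform_measure lborel T)
            {\<omega>. dist (fst \<omega>) (snd \<omega>) \<le> x}
         = ennreal (1/A^2) * (\<integral>\<^sup>+h. indicator {h. norm h \<le> x} h * covariogram T h \<partial>lborel)"
proof -
  let ?U = "uniform_measure lborel T"
  let ?f = "\<lambda>p. ennreal (1/A) * indicator T p"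
  let ?D = "{\<omega>. dist (fst \<omega>) (snd \<omega>) \<le> x}"
  let ?B = "\<lambda>h. indicator {h. norm h \<le> x} h :: ennreal"
  have U: "?U = density lborel ?f" by (rule uniform_measure_lborel_density[OF T A])
  have "sigma_finite_measure ?U"
    by (rule prob_space_imp_sigma_finite, rule prob_space_uniform_measure) (use A in auto)
  then have UU: "?U \<Otimes>\<^sub>M ?U = density (lborel \<Otimes>\<^sub>M lborel) (\<lambda>(p,q). ?f p * ?f q)"
    unfolding U by (intro pair_measure_density) (use U lborel.sigma_finite_measure_axioms in auto)
  have "{\<omega> \<in> space (lborel \<Otimes>\<^sub>M lborel). dist (fst \<omega>) (snd \<omega>) \<le> x} \<in> sets (lborel \<Otimes>\<^sub>M lborel)"
    by measurable
  then have D: "?D \<in> sets (lborel \<Otimes>\<^sub>M lborel)" by (simp add: space_pair_measure)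
  have "emeasure (?U \<Otimes>\<^sub>M ?U) ?D
     = (\<integral>\<^sup>+p. \<integral>\<^sup>+q. ?f p * ?f q * indicator ?D (p,q) \<partial>lborel \<partial>lborel)"
    unfolding UU using D
    by (subst emeasure_density) (auto simp: lborel.nn_integral_fst[symmetric] case_prod_beta)
  also have "\<dots> = (\<integral>\<^sup>+p. \<integral>\<^sup>+h. ennreal (1/A^2) * (indicator T p * indicator T (p+h) * ?B h)
                     \<partial>lborel \<partial>lborel)"
  proof (rule nn_integral_cong)
    fix p :: 'a
    have "(\<integral>\<^sup>+q. ?f p * ?f q * indicator ?D (p,q) \<partial>lborel)
        = (\<integral>\<^sup>+h. ?f p * ?f (p+h) * indicator ?D (p,p+h) \<partial>lborel)"
      by (rule nn_integral_lborel_translate) simp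
    also have "\<dots> = (\<integral>\<^sup>+h. ennreal (1/A^2) * (indicator T p * indicator T (p+h) * ?B h) \<partial>lborel)"
      using A by (intro nn_integral_cong)
        (auto simp: indicator_def dist_norm ennreal_mult'[symmetric] power2_eq_square)
    finally show "(\<integral>\<^sup>+q. ?f p * ?f q * indicator ?D (p,q) \<partial>lborel)
        = (\<integral>\<^sup>+h. ennreal (1/A^2) * (indicator T p * indicator T (p+h) * ?B h) \<partial>lborel)" .
  qed
  also have "\<dots> = ennreal (1/A^2)
                 * (\<integral>\<^sup>+p. \<integral>\<^sup>+h. indicator T p * indicator T (p+h) * ?B h \<partial>lborel \<partial>lborel)"
    by (simp add: nn_integral_cmult)
  also have "(\<integral>\<^sup>+p. \<integral>\<^sup>+h. indicator T p * indicator T (p+h) * ?B h \<partial>lborel \<partial>lborel)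
           = (\<integral>\<^sup>+h. \<integral>\<^sup>+p. indicator T p * indicator T (p+h) * ?B h \<partial>lborel \<partial>lborel)"
    by (rule lborel_pair.Fubini'[symmetric]) simp
  also have "(\<integral>\<^sup>+h. \<integral>\<^sup>+p. indicator T p * indicator T (p+h) * ?B h \<partial>lborel \<partial>lborel)
           = (\<integral>\<^sup>+h. ?B h * covariogram T h \<partial>lborel)"
  proof (rule nn_integral_cong)
    fix h :: 'a
    have "(\<integral>\<^sup>+p. indicator T p * indicator T (p+h) * ?B h \<partial>lborel)
        = (\<integral>\<^sup>+p. indicator T p * indicator T (p+h) \<partial>lborel) * ?B h"
      by (rule nn_integral_multc) measurable
    then show "(\<integral>\<^sup>+p. indicator T p * indicator T (p+h) * ?B h \<partial>lborel) = ?B h * covariogram T h"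
      by (simp add: covariogram_nn_integral mult.commute)
  qed
  finally show ?thesis .
qed


section \<open>Measure-preserving maps of the plane\<close>

lemma borel_measurable_lborel_pair:
  "f \<in> borel_measurable borel \<Longrightarrow> f \<in> borel_measurable (lborel \<Otimes>\<^sub>M lborel :: (real \<times> real) measure)"
  using measurable_cong_sets[OF lborel_prod[THEN arg_cong[where f=sets], unfolded sets_lborel] refl]
  by blast

lemma nn_integral_lborel_shear_fst:
  fixes f :: "real \<times> real \<Rightarrow> ennreal"
  assumes [measurable]: "f \<in> borel_measurable borel"
  shows "(\<integral>\<^sup>+h. f (fst h + k * snd h, snd h) \<partial>lborel) = (\<integral>\<^sup>+h. f h \<partial>lborel)"
proof -
  have [measurable]: "f \<in> borel_measurable (lborel \<Otimes>\<^sub>M lborel)"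
    by (rule borel_measurable_lborel_pair) fact
  have "(\<integral>\<^sup>+h. f (fst h + k * snd h, snd h) \<partial>lborel)
      = (\<integral>\<^sup>+b. \<integral>\<^sup>+a. f (a + k * b, b) \<partial>lborel \<partial>lborel)"
    by (subst lborel_prod[symmetric], subst lborel_pair.nn_integral_snd[symmetric]) auto
  also have "\<dots> = (\<integral>\<^sup>+b. \<integral>\<^sup>+a. f (a, b) \<partial>lborel \<partial>lborel)"
  proof (rule nn_integral_cong)
    fix b :: real
    show "(\<integral>\<^sup>+a. f (a + k * b, b) \<partial>lborel) = (\<integral>\<^sup>+a. f (a, b) \<partial>lborel)"
      using nn_integral_real_affine[of "\<lambda>a. f (a, b)" 1 "k*b"] by (simp add: add.commute)
  qed
  also have "\<dots> = (\<integral>\<^sup>+h. f h \<partial>lborel)"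
    by (subst lborel_prod[symmetric], subst lborel_pair.nn_integral_snd[symmetric]) auto
  finally show ?thesis .
qed

lemma nn_integral_lborel_shear_snd:
  fixes f :: "real \<times> real \<Rightarrow> ennreal"
  assumes [measurable]: "f \<in> borel_measurable borel"
  shows "(\<integral>\<^sup>+h. f (fst h, snd h + k * fst h) \<partial>lborel) = (\<integral>\<^sup>+h. f h \<partial>lborel)"
proof -
  have [measurable]: "f \<in> borel_measurable (lborel \<Otimes>\<^sub>M lborel)"
    by (rule borel_measurable_lborel_pair) fact
  have "(\<integral>\<^sup>+h. f (fst h, snd h + k * fst h) \<partial>lborel)
      = (\<integral>\<^sup>+a. \<integral>\<^sup>+b. f (a, b + k * a) \<partial>lborel \<partial>lborel)"
    by (subst lborel_prod[symmetric], subst lborel.nn_integral_fst[symmetric]) auto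
  also have "\<dots> = (\<integral>\<^sup>+a. \<integral>\<^sup>+b. f (a, b) \<partial>lborel \<partial>lborel)"
  proof (rule nn_integral_cong)
    fix a :: real
    show "(\<integral>\<^sup>+b. f (a, b + k * a) \<partial>lborel) = (\<integral>\<^sup>+b. f (a, b) \<partial>lborel)"
      using nn_integral_real_affine[of "\<lambda>b. f (a, b)" 1 "k*a"] by (simp add: add.commute)
  qed
  also have "\<dots> = (\<integral>\<^sup>+h. f h \<partial>lborel)"
    by (subst lborel_prod[symmetric], subst lborel.nn_integral_fst[symmetric]) auto
  finally show ?thesis .
qed

definition rot120 :: "real \<times> real \<Rightarrow> real \<times> real" where
  "rot120 h = ((fst h - sqrt 3 * snd h)/2, (sqrt 3 * fst h + snd h)/2)"

text \<open>Lebesgue measure is invariant under rot120, which factors into three shears.\<close>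
lemma nn_integral_lborel_rot120:
  fixes f :: "real \<times> real \<Rightarrow> ennreal"
  assumes [measurable]: "f \<in> borel_measurable borel"
  shows "(\<integral>\<^sup>+h. f (rot120 h) \<partial>lborel) = (\<integral>\<^sup>+h. f h \<partial>lborel)"
proof -
  let ?X = "\<lambda>h::real\<times>real. (fst h + (-1/sqrt 3) * snd h, snd h)"
  let ?Y = "\<lambda>h::real\<times>real. (fst h, snd h + (sqrt 3/2) * fst h)"
  have eq: "rot120 h = ?X (?Y (?X h))" for h
    unfolding rot120_def by (simp add: field_simps)
  have [measurable]: "?X \<in> borel_measurable borel" "?Y \<in> borel_measurable borel"
    by (intro borel_measurable_continuous_onI continuous_intros)+
  have "(\<integral>\<^sup>+h. f (rot120 h) \<partial>lborel) = (\<integral>\<^sup>+h. (\<lambda>h. (\<lambda>h. f (?X h)) (?Y h)) (?X h) \<partial>lborel)"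
    unfolding eq ..
  also have "\<dots> = (\<integral>\<^sup>+h. (\<lambda>h. f (?X h)) (?Y h) \<partial>lborel)"
    by (rule nn_integral_lborel_shear_fst) measurable
  also have "\<dots> = (\<integral>\<^sup>+h. f (?X h) \<partial>lborel)"
    by (rule nn_integral_lborel_shear_snd) measurable
  also have "\<dots> = (\<integral>\<^sup>+h. f h \<partial>lborel)"
    by (rule nn_integral_lborel_shear_fst) measurable
  finally show ?thesis .
qed

lemma norm_rot120 [simp]: "norm (rot120 h) = norm h"
proof -
  have "(fst (rot120 h))^2 + (snd (rot120 h))^2 = (fst h)^2 + (snd h)^2"
    unfolding rot120_def by (simp add: field_simps power2_eq_square)
  then show ?thesis by (simp add: norm_prod_def)
qed

section \<open>Triangles cut out by three edge functionals\<close>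

text \<open>The three edge functionals: inner products with the outward unit normals of the
  edges of P_{3,r}.  They sum to zero and are permuted (up to sign) by rot120.\<close>
definition edge1 :: "real \<times> real \<Rightarrow> real" where "edge1 h = - fst h"
definition edge2 :: "real \<times> real \<Rightarrow> real" where "edge2 h = (fst h + sqrt 3 * snd h)/2"
definition edge3 :: "real \<times> real \<Rightarrow> real" where "edge3 h = (fst h - sqrt 3 * snd h)/2"

lemma edges_sum: "edge1 h + edge2 h + edge3 h = 0"
  by (simp add: edge1_def edge2_def edge3_def field_simps)

lemma edges_zero: "edge1 h = 0 \<Longrightarrow> edge2 h = 0 \<Longrightarrow> h = 0"
  unfolding edge1_def edge2_def by (cases h) (auto simp: zero_prod_def)

lemma edges_rot120: "edge1 (rot120 h) = - edge3 h" "edge2 (rot120 h) = - edge1 h"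
  "edge3 (rot120 h) = - edge2 h"
  unfolding edge1_def edge2_def edge3_def rot120_def by (simp_all add: field_simps)

lemma edges_measurable [measurable]: "edge1 \<in> borel_measurable borel"
  "edge2 \<in> borel_measurable borel" "edge3 \<in> borel_measurable borel"
  unfolding edge1_def edge2_def edge3_def
  by (auto intro!: borel_measurable_continuous_onI continuous_intros)

definition tri :: "real \<Rightarrow> real \<Rightarrow> real \<Rightarrow> (real \<times> real) set" where
  "tri c1 c2 c3 = {p. edge1 p \<le> c1 \<and> edge2 p \<le> c2 \<and> edge3 p \<le> c3}"

lemma tri_closed: "closed (tri c1 c2 c3)"
  unfolding tri_def edge1_def edge2_def edge3_def
  by (intro closed_Collect_conj closed_Collect_le continuous_intros) auto

lemma tri_sets [measurable]: "tri c1 c2 c3 \<in> sets borel"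
  using tri_closed by (simp add: borel_closed)

lemma tri_vertical_slice:
  "Pair x -` tri c1 c2 c3 = (if -x \<le> c1 then {(x - 2*c3)/sqrt 3 .. (2*c2 - x)/sqrt 3} else {})"
  unfolding tri_def edge1_def edge2_def edge3_def by (auto simp: field_simps)

lemma emeasure_tri_vertical_slice:
  "emeasure lborel (Pair x -` tri c1 c2 c3)
   = ennreal (indicator {-c1..c2+c3} x * (2*(c2+c3-x)/sqrt 3))"
proof (cases "-x \<le> c1 \<and> x \<le> c2+c3")
  case True
  then have "(x - 2*c3)/sqrt 3 \<le> (2*c2 - x)/sqrt 3" by (simp add: divide_right_mono)
  then show ?thesis using True
    by (simp add: tri_vertical_slice emeasure_lborel_Icc_eq indicator_def field_simps)
next
  case False
  then have "\<not> -x \<le> c1 \<or> \<not> (x - 2*c3)/sqrt 3 \<le> (2*c2 - x)/sqrt 3"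
    by (auto simp: divide_le_cancel)
  then show ?thesis using False
    by (auto simp: tri_vertical_slice emeasure_lborel_Icc_eq indicator_def)
qed

text \<open>Area of the triangle: the side length is 2(c1+c2+c3)/sqrt 3.\<close>
lemma emeasure_tri: "emeasure lborel (tri c1 c2 c3) = ennreal ((max 0 (c1+c2+c3))^2 / sqrt 3)"
proof -
  have "emeasure lborel (tri c1 c2 c3)
      = (\<integral>\<^sup>+x. ennreal (indicator {-c1..c2+c3} x * (2*(c2+c3-x)/sqrt 3)) \<partial>lborel)"
  proof -
    have "emeasure lborel (tri c1 c2 c3) = emeasure (lborel \<Otimes>\<^sub>M lborel) (tri c1 c2 c3)"
      by (simp add: lborel_prod)
    also have "\<dots> = (\<integral>\<^sup>+x. emeasure lborel (Pair x -` tri c1 c2 c3) \<partial>lborel)"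
      by (rule lborel.emeasure_pair_measure_alt) (unfold lborel_prod, simp)
    finally show ?thesis by (simp add: emeasure_tri_vertical_slice)
  qed
  also have "\<dots> = ennreal ((max 0 (c1+c2+c3))^2 / sqrt 3)"
  proof (cases "-c1 \<le> c2+c3")
    case True
    define F where "F = (\<lambda>x::real. - ((c2+c3-x)^2/sqrt 3))"
    have "((\<lambda>x. 2*(c2+c3-x)/sqrt 3) has_integral (F (c2+c3) - F (-c1))) {-c1..c2+c3}"
    proof (rule fundamental_theorem_of_calculus)
      fix x :: real
      have "(F has_real_derivative 2*(c2+c3-x)/sqrt 3) (at x within {-c1..c2+c3})"
        unfolding F_def by (rule derivative_eq_intros refl | (simp; fail))+ (simp add: field_simps)
      then show "(F has_vector_derivative 2*(c2+c3-x)/sqrt 3) (at x within {-c1..c2+c3})"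
        by (simp add: has_real_derivative_iff_has_vector_derivative)
    qed (use True in auto)
    then have "((\<lambda>x. 2*(c2+c3-x)/sqrt 3) has_integral (max 0 (c1+c2+c3))^2 / sqrt 3) {-c1..c2+c3}"
      using True by (simp add: F_def add.commute add.left_commute)
    then show ?thesis
      by (rule nn_integral_has_integral_lebesgue[rotated]) (auto simp: field_simps)
  next
    case False
    then show ?thesis by (simp add: indicator_def)
  qed
  finally show ?thesis .
qed

lemma tri3_eq_tri: assumes r: "0 < r" shows "tri3 r = tri (r/2) (r/2) (r/2)"
proof -
  let ?P = "\<lambda>u v w. u *\<^sub>R (r, 0) + v *\<^sub>R (- r / 2, sqrt 3 * r / 2) + w *\<^sub>R (- r / 2, - sqrt 3 * r / 2)"
  have s3: "sqrt 3 * sqrt 3 = 3" by simp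
  show ?thesis
  unfolding tri3_def convex_hull_3 tri_def edge1_def edge2_def edge3_def
  proof (intro equalityI subsetI)
    fix p assume "p \<in> {?P u v w |u v w. 0 \<le> u \<and> 0 \<le> v \<and> 0 \<le> w \<and> u + v + w = 1}"
    then obtain u v w where uvw: "0 \<le> u" "0 \<le> v" "0 \<le> w" "u + v + w = 1" and p: "p = ?P u v w"
      by blast
    have fp: "fst p = u * r - v * r/2 - w * r/2" "snd p = (v - w) * sqrt 3 * r/2"
      using p by (auto simp: algebra_simps)
    have w: "w = 1 - u - v" using uvw by simp
    have sq: "sqrt 3 * snd p = 3 * ((v-w) * r/2)"
      unfolding fp by (simp add: field_simps)
    have e1: "- fst p = r/2 - 3/2 * (u * r)"
      and e2: "(fst p + sqrt 3 * snd p)/2 = r/2 - 3/2 * (w * r)"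
      and e3: "(fst p - sqrt 3 * snd p)/2 = r/2 - 3/2 * (v * r)"
      unfolding sq unfolding fp w by (simp_all add: field_simps)
    have "0 \<le> u * r" "0 \<le> v * r" "0 \<le> w * r" using uvw r by auto
    then show "p \<in> {p. - fst p \<le> r / 2 \<and> (fst p + sqrt 3 * snd p) / 2 \<le> r / 2
                          \<and> (fst p - sqrt 3 * snd p) / 2 \<le> r / 2}"
      unfolding mem_Collect_eq e1 e2 e3 by linarith
  next
    fix p assume "p \<in> {p. - fst p \<le> r / 2 \<and> (fst p + sqrt 3 * snd p) / 2 \<le> r / 2
                          \<and> (fst p - sqrt 3 * snd p) / 2 \<le> r / 2}"
    then have h: "- fst p \<le> r / 2" "(fst p + sqrt 3 * snd p) / 2 \<le> r / 2"
      "(fst p - sqrt 3 * snd p) / 2 \<le> r / 2" by auto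
    obtain x y where p: "p = (x,y)" by fastforce
    text \<open>Barycentric coordinates of p.\<close>
    define u where "u = (2*x+r)/(3*r)"
    define v where "v = (r - x + sqrt 3 * y)/(3*r)"
    define w where "w = (r - x - sqrt 3 * y)/(3*r)"
    have "0 \<le> u" "0 \<le> v" "0 \<le> w" using h r unfolding u_def v_def w_def p by (auto simp: field_simps)
    moreover have "u + v + w = 1" using r unfolding u_def v_def w_def by (simp add: field_simps)
    moreover have "p = ?P u v w"
      using r unfolding u_def v_def w_def p by (auto simp: field_simps s3)
    ultimately show "p \<in> {?P u v w |u v w. 0 \<le> u \<and> 0 \<le> v \<and> 0 \<le> w \<and> u + v + w = 1}" by blast
  qed
qed

lemma tri3_sets [measurable]: "0 < r \<Longrightarrow> tri3 r \<in> sets lborel"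
  using tri3_eq_tri[of r] by simp

lemma emeasure_tri3: "0 < r \<Longrightarrow> emeasure lborel (tri3 r) = ennreal ((3*r/2)^2/sqrt 3)"
  using tri3_eq_tri[of r] emeasure_tri[of "r/2" "r/2" "r/2"] by simp

text \<open>Step (2).  The hexagon gauge: h is a difference vector of P_{3,r} iff
  hex_gauge h \<le> 3r/2; it is invariant under rot120.\<close>
definition hex_gauge :: "real \<times> real \<Rightarrow> real" where
  "hex_gauge h = max 0 (edge1 h) + max 0 (edge2 h) + max 0 (edge3 h)"

lemma hex_gauge_rot120: "hex_gauge (rot120 h) = hex_gauge h"
  unfolding hex_gauge_def edges_rot120 using edges_sum[of h] by (simp add: max_def)

definition tri3_cov :: "real \<Rightarrow> real \<times> real \<Rightarrow> real" where
  "tri3_cov r h = (max 0 (3*r/2 - hex_gauge h))^2 / sqrt 3"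

lemma tri3_inter_translate:
  assumes "0 < r"
  shows "{p. p \<in> tri3 r \<and> p + h \<in> tri3 r}
       = tri (r/2 - max 0 (edge1 h)) (r/2 - max 0 (edge2 h)) (r/2 - max 0 (edge3 h))"
  unfolding tri3_eq_tri[OF assms] tri_def edge1_def edge2_def edge3_def
  by (auto simp: field_simps max_def)

lemma covariogram_tri3: "0 < r \<Longrightarrow> covariogram (tri3 r) h = ennreal (tri3_cov r h)"
  unfolding covariogram_def tri3_inter_translate emeasure_tri tri3_cov_def hex_gauge_def
  by (simp add: algebra_simps)

lemma tri3_cov_measurable [measurable]: "tri3_cov r \<in> borel_measurable borel"
  unfolding tri3_cov_def hex_gauge_def edge1_def edge2_def edge3_def
  by (intro borel_measurable_continuous_onI continuous_intros; simp)

lemma tri3_cov_rot120: "tri3_cov r (rot120 h) = tri3_cov r h"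
  unfolding tri3_cov_def hex_gauge_rot120 ..


section \<open>Reduction to a sector\<close>

lemma zero_sum_abs_max_unique:
  fixes a b c :: real
  assumes "a + b + c = 0" "\<not> (a = 0 \<and> b = 0)"
  shows "(\<bar>b\<bar> \<le> \<bar>a\<bar> \<and> \<bar>c\<bar> < \<bar>a\<bar>) \<and> \<not>(\<bar>c\<bar> \<le> \<bar>b\<bar> \<and> \<bar>a\<bar> < \<bar>b\<bar>) \<and> \<not>(\<bar>a\<bar> \<le> \<bar>c\<bar> \<and> \<bar>b\<bar> < \<bar>c\<bar>)
       \<or> \<not>(\<bar>b\<bar> \<le> \<bar>a\<bar> \<and> \<bar>c\<bar> < \<bar>a\<bar>) \<and> (\<bar>c\<bar> \<le> \<bar>b\<bar> \<and> \<bar>a\<bar> < \<bar>b\<bar>) \<and> \<not>(\<bar>a\<bar> \<le> \<bar>c\<bar> \<and> \<bar>b\<bar> < \<bar>c\<bar>)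
       \<or> \<not>(\<bar>b\<bar> \<le> \<bar>a\<bar> \<and> \<bar>c\<bar> < \<bar>a\<bar>) \<and> \<not>(\<bar>c\<bar> \<le> \<bar>b\<bar> \<and> \<bar>a\<bar> < \<bar>b\<bar>) \<and> (\<bar>a\<bar> \<le> \<bar>c\<bar> \<and> \<bar>b\<bar> < \<bar>c\<bar>)"
  using assms by (auto simp: abs_if split: if_splits)

definition sector1 :: "(real \<times> real) set" where
  "sector1 = {h. \<bar>edge2 h\<bar> \<le> \<bar>edge1 h\<bar> \<and> \<bar>edge3 h\<bar> < \<bar>edge1 h\<bar>}"
definition sector2 :: "(real \<times> real) set" where
  "sector2 = {h. \<bar>edge3 h\<bar> \<le> \<bar>edge2 h\<bar> \<and> \<bar>edge1 h\<bar> < \<bar>edge2 h\<bar>}"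
definition sector3 :: "(real \<times> real) set" where
  "sector3 = {h. \<bar>edge1 h\<bar> \<le> \<bar>edge3 h\<bar> \<and> \<bar>edge2 h\<bar> < \<bar>edge3 h\<bar>}"

lemma rot120_sector: "rot120 h \<in> sector2 \<longleftrightarrow> h \<in> sector1" "rot120 h \<in> sector3 \<longleftrightarrow> h \<in> sector2"
  by (simp_all add: sector1_def sector2_def sector3_def edges_rot120)

lemma sectors_measurable [measurable]:
  "sector1 \<in> sets borel" "sector2 \<in> sets borel" "sector3 \<in> sets borel"
proof -
  have "sector1 = {h \<in> space borel. \<bar>edge2 h\<bar> \<le> \<bar>edge1 h\<bar> \<and> \<bar>edge3 h\<bar> < \<bar>edge1 h\<bar>}"
    by (simp add: sector1_def)
  also have "\<dots> \<in> sets borel" by measurable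
  finally show "sector1 \<in> sets borel" .
  have "sector2 = {h \<in> space borel. \<bar>edge3 h\<bar> \<le> \<bar>edge2 h\<bar> \<and> \<bar>edge1 h\<bar> < \<bar>edge2 h\<bar>}"
    by (simp add: sector2_def)
  also have "\<dots> \<in> sets borel" by measurable
  finally show "sector2 \<in> sets borel" .
  have "sector3 = {h \<in> space borel. \<bar>edge1 h\<bar> \<le> \<bar>edge3 h\<bar> \<and> \<bar>edge2 h\<bar> < \<bar>edge3 h\<bar>}"
    by (simp add: sector3_def)
  also have "\<dots> \<in> sets borel" by measurable
  finally show "sector3 \<in> sets borel" .
qed

lemma sectors_partition:
  "h \<noteq> 0 \<Longrightarrow> indicator sector1 h + indicator sector2 h + indicator sector3 h = (1::ennreal)"
  using zero_sum_abs_max_unique[OF edges_sum[of h]] edges_zero[of h]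
  unfolding sector1_def sector2_def sector3_def by (auto simp: indicator_def)

lemma nn_integral_rot120_invariant:
  fixes \<Phi> :: "real \<times> real \<Rightarrow> ennreal"
  assumes [measurable]: "\<Phi> \<in> borel_measurable borel" and inv: "\<And>h. \<Phi> (rot120 h) = \<Phi> h"
  shows "(\<integral>\<^sup>+h. \<Phi> h \<partial>lborel) = 3 * (\<integral>\<^sup>+h. \<Phi> h * indicator sector1 h \<partial>lborel)"
proof -
  have rotate: "(\<integral>\<^sup>+h. \<Phi> h * indicator S' h \<partial>lborel) = (\<integral>\<^sup>+h. \<Phi> h * indicator S h \<partial>lborel)"
    if [measurable]: "S' \<in> sets borel" and S: "\<And>h. rot120 h \<in> S' \<longleftrightarrow> h \<in> S" for S S'
  proof -
    have "(\<integral>\<^sup>+h. \<Phi> h * indicator S' h \<partial>lborel) = (\<integral>\<^sup>+h. \<Phi> (rot120 h) * indicator S' (rot120 h) \<partial>lborel)"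
      by (rule nn_integral_lborel_rot120[where f="\<lambda>h. \<Phi> h * indicator S' h", symmetric]) measurable
    also have "\<dots> = (\<integral>\<^sup>+h. \<Phi> h * indicator S h \<partial>lborel)"
      by (intro nn_integral_cong) (simp add: inv S indicator_def)
    finally show ?thesis .
  qed
  have "(\<integral>\<^sup>+h. \<Phi> h \<partial>lborel)
      = (\<integral>\<^sup>+h. \<Phi> h * indicator sector1 h + \<Phi> h * indicator sector2 h + \<Phi> h * indicator sector3 h \<partial>lborel)"
  proof (rule nn_integral_cong_AE)
    show "AE h in lborel. \<Phi> h = \<Phi> h * indicator sector1 h + \<Phi> h * indicator sector2 h
                                  + \<Phi> h * indicator sector3 h"
      using AE_lborel_singleton[of 0]
      by eventually_elim (simp add: sectors_partition distrib_left[symmetric])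
  qed
  also have "\<dots> = (\<integral>\<^sup>+h. \<Phi> h * indicator sector1 h \<partial>lborel) + (\<integral>\<^sup>+h. \<Phi> h * indicator sector2 h \<partial>lborel)
                 + (\<integral>\<^sup>+h. \<Phi> h * indicator sector3 h \<partial>lborel)"
    by (simp add: nn_integral_add)
  also have "\<dots> = 3 * (\<integral>\<^sup>+h. \<Phi> h * indicator sector1 h \<partial>lborel)"
  proof -
    have three: "3 * y = y + y + y" for y :: ennreal
    proof -
      have "(3::ennreal) = 1 + 1 + 1" by simp
      then show ?thesis by (simp only: distrib_right mult_1)
    qed
    show ?thesis
      using rotate[of sector2 sector1] rotate[of sector3 sector2] by (simp add: rot120_sector three)
  qed
  finally show ?thesis .
qed

lemma hex_gauge_sector1: "h \<in> sector1 \<Longrightarrow> hex_gauge h = \<bar>fst h\<bar>"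
proof -
  assume "h \<in> sector1"
  then have "\<bar>edge2 h\<bar> \<le> \<bar>edge1 h\<bar>" "\<bar>edge3 h\<bar> \<le> \<bar>edge1 h\<bar>" by (auto simp: sector1_def)
  with edges_sum[of h] have "hex_gauge h = \<bar>edge1 h\<bar>"
    unfolding hex_gauge_def by (auto simp: max_def abs_if)
  then show ?thesis by (simp add: edge1_def)
qed

text \<open>Half the length of the vertical slice at abscissa a of the first sector
  intersected with the disc of radius x.\<close>
definition sector_width :: "real \<Rightarrow> real \<Rightarrow> real" where
  "sector_width x a = (if \<bar>a\<bar> \<le> x then min (\<bar>a\<bar>/sqrt 3) (sqrt (x^2 - a^2)) else 0)"

lemma sector_width_nonneg: "0 \<le> sector_width x a"
  unfolding sector_width_def by (auto simp: abs_le_square_iff[symmetric])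

lemma sector_width_abs [simp]: "sector_width x \<bar>a\<bar> = sector_width x a"
  unfolding sector_width_def by simp

lemma sector_width_measurable [measurable]: "sector_width x \<in> borel_measurable borel"
  unfolding sector_width_def by measurable

lemma sector1_disc_slice_iff:
  "(a, b) \<in> sector1 \<and> norm (a, b) \<le> x \<longleftrightarrow>
     \<bar>a - sqrt 3 * b\<bar> < 2*\<bar>a\<bar> \<and> \<bar>a + sqrt 3 * b\<bar> \<le> 2*\<bar>a\<bar> \<and> 0 \<le> x \<and> a^2 + b^2 \<le> x^2"
proof -
  have "sqrt (a^2 + b^2) \<le> x \<longleftrightarrow> 0 \<le> x \<and> a^2 + b^2 \<le> x^2"
    by (metis add_nonneg_nonneg real_le_lsqrt real_sqrt_le_iff real_sqrt_ge_zero zero_le_power2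
        real_le_rsqrt order_trans sqrt_le_D)
  then have "norm (a, b) \<le> x \<longleftrightarrow> 0 \<le> x \<and> a^2 + b^2 \<le> x^2" by (simp add: norm_Pair)
  then show ?thesis unfolding sector1_def edge1_def edge2_def edge3_def by auto
qed

lemma sector1_disc_slice_bounds:
  assumes a: "0 < \<bar>a\<bar>" "\<bar>a\<bar> \<le> x"
  defines "B \<equiv> {b. (a, b) \<in> sector1 \<and> norm (a, b) \<le> x}" and "m \<equiv> sector_width x a"
  shows "{-m<..<m} \<subseteq> B" "B \<subseteq> {-m..m}"
proof -
  have xa: "0 \<le> x^2 - a^2" using a by (simp add: abs_le_square_iff[symmetric])
  have m: "m = min (\<bar>a\<bar>/sqrt 3) (sqrt (x^2 - a^2))" using a by (simp add: m_def sector_width_def)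
  show "{-m<..<m} \<subseteq> B"
  proof
    fix b assume "b \<in> {-m<..<m}"
    then have b1: "\<bar>b\<bar> < \<bar>a\<bar>/sqrt 3" and b2: "\<bar>b\<bar> < sqrt (x^2 - a^2)" unfolding m by auto
    from b1 have "\<bar>sqrt 3 * b\<bar> < \<bar>a\<bar>" by (simp add: field_simps abs_mult)
    moreover from b2 have "b^2 < x^2 - a^2"
      using real_sqrt_less_iff[of "b^2" "x^2 - a^2"] by simp
    ultimately show "b \<in> B" unfolding B_def sector1_disc_slice_iff using a by auto
  qed
  show "B \<subseteq> {-m..m}"
  proof
    fix b assume "b \<in> B"
    then have h: "\<bar>a - sqrt 3 * b\<bar> < 2*\<bar>a\<bar>" "\<bar>a + sqrt 3 * b\<bar> \<le> 2*\<bar>a\<bar>" "a^2 + b^2 \<le> x^2"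
      unfolding B_def sector1_disc_slice_iff by auto
    have "\<bar>sqrt 3 * b\<bar> \<le> \<bar>a\<bar>" using h(1,2) by arith
    then have b1: "\<bar>b\<bar> \<le> \<bar>a\<bar>/sqrt 3" by (simp add: field_simps abs_mult)
    have b2: "\<bar>b\<bar> \<le> sqrt (x^2 - a^2)" using h(3) by (intro real_le_rsqrt) simp
    show "b \<in> {-m..m}" using b1 b2 unfolding m by auto
  qed
qed

lemma sector1_disc_slice_sets: "{b. (a, b) \<in> sector1 \<and> norm (a, b) \<le> x} \<in> sets lborel"
proof -
  have "{b. (a, b) \<in> sector1 \<and> norm (a, b) \<le> x} = {b \<in> space borel. (a, b) \<in> sector1 \<and> norm (a, b) \<le> x}"
    by simp
  also have "\<dots> \<in> sets borel" by measurable
  finally show ?thesis by simp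
qed

lemma emeasure_sector1_disc_slice:
  "emeasure lborel {b. (a, b) \<in> sector1 \<and> norm (a, b) \<le> x} = ennreal (2 * sector_width x a)"
proof (cases "0 < \<bar>a\<bar> \<and> \<bar>a\<bar> \<le> x")
  case True
  let ?B = "{b. (a, b) \<in> sector1 \<and> norm (a, b) \<le> x}"
  let ?m = "sector_width x a"
  have "emeasure lborel {-?m<..<?m} \<le> emeasure lborel ?B"
    using sector1_disc_slice_bounds(1)[of a x] True by (intro emeasure_mono sector1_disc_slice_sets) auto
  moreover have "emeasure lborel ?B \<le> emeasure lborel {-?m..?m}"
    using sector1_disc_slice_bounds(2)[of a x] True by (intro emeasure_mono) auto
  ultimately show ?thesis using sector_width_nonneg[of x a] by (auto intro: antisym)
next
  case False
  have False if "b \<in> {b. (a, b) \<in> sector1 \<and> norm (a, b) \<le> x}" for b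
  proof -
    have h: "\<bar>a - sqrt 3 * b\<bar> < 2*\<bar>a\<bar>" "0 \<le> x" "a^2 + b^2 \<le> x^2"
      using that unfolding mem_Collect_eq sector1_disc_slice_iff by auto
    have "\<bar>a\<bar>^2 \<le> x^2" using h(3) zero_le_power2[of b] unfolding power2_abs by linarith
    then have "\<bar>a\<bar> \<le> x" using h(2) by (rule power2_le_imp_le)
    moreover have "a \<noteq> 0" using h(1) by auto
    ultimately show False using False by auto
  qed
  then have empty: "{b. (a, b) \<in> sector1 \<and> norm (a, b) \<le> x} = {}" by blast
  have "sector_width x a = 0" using False unfolding sector_width_def by auto
  then show ?thesis unfolding empty by simp
qed

lemma nn_integral_sector1:
  "(\<integral>\<^sup>+h. indicator {h. norm h \<le> x} h * ennreal (tri3_cov r h) * indicator sector1 h \<partial>lborel)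
    = (\<integral>\<^sup>+a. ennreal ((max 0 (3*r/2 - \<bar>a\<bar>))^2/sqrt 3 * (2 * sector_width x a)) \<partial>lborel)"
proof -
  let ?F = "\<lambda>h. indicator {h. norm h \<le> x} h * ennreal (tri3_cov r h) * indicator sector1 h"
  let ?k = "\<lambda>a. (max 0 (3*r/2 - \<bar>a\<bar>))^2/sqrt 3"
  have [measurable]: "?F \<in> borel_measurable (lborel \<Otimes>\<^sub>M lborel)"
    by (rule borel_measurable_lborel_pair) measurable
  have "(\<integral>\<^sup>+h. ?F h \<partial>lborel) = (\<integral>\<^sup>+a. \<integral>\<^sup>+b. ?F (a,b) \<partial>lborel \<partial>lborel)"
    by (subst lborel_prod[symmetric], rule lborel.nn_integral_fst[symmetric]) measurable
  also have "\<dots> = (\<integral>\<^sup>+a. ennreal (?k a * (2 * sector_width x a)) \<partial>lborel)"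
  proof (rule nn_integral_cong)
    fix a :: real
    have "(\<integral>\<^sup>+b. ?F (a,b) \<partial>lborel)
        = (\<integral>\<^sup>+b. ennreal (?k a) * indicator {b. (a,b) \<in> sector1 \<and> norm (a,b) \<le> x} b \<partial>lborel)"
    proof (rule nn_integral_cong)
      fix b :: real
      show "?F (a,b) = ennreal (?k a) * indicator {b. (a,b) \<in> sector1 \<and> norm (a,b) \<le> x} b"
        by (cases "(a,b) \<in> sector1") (simp_all add: indicator_def tri3_cov_def hex_gauge_sector1)
    qed
    also have "\<dots> = ennreal (?k a) * emeasure lborel {b. (a,b) \<in> sector1 \<and> norm (a,b) \<le> x}"
      by (rule nn_integral_cmult_indicator[OF sector1_disc_slice_sets])
    also have "\<dots> = ennreal (?k a * (2 * sector_width x a))"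
      unfolding emeasure_sector1_disc_slice using sector_width_nonneg[of x a]
      by (intro ennreal_mult[symmetric]) auto
    finally show "(\<integral>\<^sup>+b. ?F (a,b) \<partial>lborel) = ennreal (?k a * (2 * sector_width x a))" .
  qed
  finally show ?thesis .
qed


section \<open>The one-dimensional slice integral\<close>

lemma sqrt_circle_deriv:
  fixes t a :: real assumes "a^2 < t^2"
  shows "((\<lambda>a. sqrt (t^2 - a^2)) has_real_derivative (-a / sqrt (t^2 - a^2))) (at a)"
  using assms by (auto intro!: derivative_eq_intros simp: field_simps)

lemma arcsin_ratio_deriv:
  fixes t a :: real assumes "0 < t" "-t < a" "a < t"
  shows "((\<lambda>a. arcsin (a/t)) has_real_derivative (1 / sqrt (t^2 - a^2))) (at a)"
proof -
  have at1: "-1 < a/t" "a/t < 1" using assms by (auto simp: field_simps)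
  have "1 - (a/t)^2 = (t^2 - a^2)/t^2" using assms by (simp add: field_simps power2_eq_square)
  then have e: "sqrt (1 - (a/t)^2) = sqrt (t^2 - a^2)/t" using assms by (simp add: real_sqrt_divide)
  have "((\<lambda>a. arcsin (a/t)) has_real_derivative inverse (sqrt (1 - (a/t)^2)) * (1/t)) (at a)"
    by (rule DERIV_chain2[OF DERIV_arcsin]) (use at1 assms in \<open>auto intro!: derivative_eq_intros\<close>)
  moreover have "inverse (sqrt (1 - (a/t)^2)) * (1/t) = 1 / sqrt (t^2 - a^2)"
    using e assms by (simp add: field_simps)
  ultimately show ?thesis by simp
qed

text \<open>A primitive of (c - a)^2 * sqrt (t^2 - a^2) with respect to a.\<close>
definition prim_circ :: "real \<Rightarrow> real \<Rightarrow> real \<Rightarrow> real" where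
  "prim_circ c t a = c^2 * (a * sqrt (t^2 - a^2) + t^2 * arcsin (a/t))/2 + 2*c * sqrt (t^2 - a^2)^3/3
     + t^4 * arcsin (a/t)/8 - a * sqrt (t^2 - a^2) * (t^2 - 2*a^2)/8"

definition prim_lin :: "real \<Rightarrow> real \<Rightarrow> real" where
  "prim_lin c a = c^2*a^2/2 - 2*c*a^3/3 + a^4/4"

lemma prim_circ_deriv:
  fixes c t a :: real assumes "0 < t" "-t < a" "a < t"
  shows "((\<lambda>a. prim_circ c t a) has_real_derivative (c - a)^2 * sqrt (t^2 - a^2)) (at a)"
proof -
  have "\<bar>a\<bar>^2 < t^2" by (rule power_strict_mono) (use assms in auto)
  then have lt: "a^2 < t^2" by simp
  define S where "S = (\<lambda>a. sqrt (t^2 - a^2))"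
  define AS where "AS = (\<lambda>a::real. arcsin (a/t))"
  have Sx: "\<And>x. sqrt (t^2 - x^2) = S x" "\<And>x. arcsin (x/t) = AS x" by (simp_all add: S_def AS_def)
  have d1: "(S has_real_derivative (-a / S a)) (at a)" unfolding S_def using sqrt_circle_deriv[OF lt] .
  have d2: "(AS has_real_derivative (1 / S a)) (at a)"
    unfolding AS_def S_def using arcsin_ratio_deriv[OF assms] .
  have s: "S a > 0" "(S a)^2 = t^2 - a^2" using lt by (simp_all add: S_def)
  have "((\<lambda>a. c^2 * (a * S a + t^2 * AS a)/2 + 2*c * S a^3/3
     + t^4 * AS a/8 - a * S a * (t^2 - 2*a^2)/8) has_real_derivative (c - a)^2 * S a) (at a)"
    apply (rule derivative_eq_intros d1 d2 refl | (simp; fail))+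
    using s apply (simp add: field_simps power2_eq_square power3_eq_cube)
    by algebra
  then show ?thesis unfolding prim_circ_def Sx .
qed

lemma integral_prim_circ:
  assumes "0 < t" "-t \<le> a0" "a0 \<le> b" "b \<le> t"
  shows "((\<lambda>a. (c - a)^2 * sqrt (t^2 - a^2)) has_integral (prim_circ c t b - prim_circ c t a0)) {a0..b}"
proof (rule fundamental_theorem_of_calculus_interior)
  show "continuous_on {a0..b} (prim_circ c t)"
    unfolding prim_circ_def using assms by (intro continuous_intros) (auto simp: field_simps)
  fix x assume "x \<in> {a0<..<b}"
  then show "(prim_circ c t has_vector_derivative (c - x)^2 * sqrt (t^2 - x^2)) (at x)"
    using assms prim_circ_deriv[of t x c] by (simp add: has_real_derivative_iff_has_vector_derivative)
qed (use assms in auto)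

lemma integral_prim_lin:
  assumes "0 \<le> b"
  shows "((\<lambda>a. (c - a)^2 * (a / sqrt 3)) has_integral prim_lin c b / sqrt 3) {0..b}"
proof -
  have "((\<lambda>a. (c - a)^2 * (a / sqrt 3)) has_integral (prim_lin c b / sqrt 3 - prim_lin c 0 / sqrt 3)) {0..b}"
  proof (rule fundamental_theorem_of_calculus[where f="\<lambda>a. prim_lin c a / sqrt 3"])
    fix x :: real assume "x \<in> {0..b}"
    have "((\<lambda>a. prim_lin c a / sqrt 3) has_real_derivative (c - x)^2 * (x / sqrt 3)) (at x within {0..b})"
      unfolding prim_lin_def
      apply (rule derivative_eq_intros refl | (simp; fail))+
      by (simp add: field_simps power2_eq_square power3_eq_cube)
    then show "((\<lambda>a. prim_lin c a / sqrt 3) has_vector_derivative (c - x)^2 * (x / sqrt 3)) (at x within {0..b})"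
      by (simp add: has_real_derivative_iff_has_vector_derivative)
  qed (use assms in auto)
  then show ?thesis by (simp add: prim_lin_def)
qed

lemma arcsin_sqrt3_half: "arcsin (sqrt 3/2) = pi/3"
  using arcsin_sin[of "pi/3"] sin_60 by simp

lemma prim_circ_at_radius: "0 < t \<Longrightarrow> prim_circ c t t = pi*c^2*t^2/4 + pi*t^4/16"
  unfolding prim_circ_def by (simp add: field_simps)

lemma prim_circ_at_break: assumes "0 < t"
  shows "prim_circ c t (sqrt 3/2*t) = c^2*t^2*(sqrt 3/8 + pi/6) + c*t^3/12 + pi*t^4/24 + sqrt 3*t^4/64"
proof -
  have s3: "sqrt 3 * sqrt 3 = 3" by simp
  have "t^2 - (sqrt 3/2*t)^2 = (t/2)^2" by (simp add: power2_eq_square field_simps)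
  then have e1: "sqrt (t^2 - (sqrt 3/2*t)^2) = t/2" using assms by simp
  have e2: "arcsin (sqrt 3/2*t/t) = pi/3" using assms arcsin_sqrt3_half by simp
  show ?thesis unfolding prim_circ_def e1 e2
    by (simp add: field_simps power2_eq_square power3_eq_cube) (simp add: power4_eq_xxxx s3 algebra_simps)
qed

lemma prim_circ_at_c: assumes "0 < c" "c \<le> t"
  shows "prim_circ c t c = (c^2*t^2/2 + t^4/8) * arcsin (c/t) + c * sqrt (t^2 - c^2) * (c^2/12 + 13*t^2/24)"
proof -
  have h3: "sqrt (t^2 - c^2)^3 = sqrt (t^2 - c^2) * (t^2 - c^2)"
    using assms by (simp add: power3_eq_cube power2_eq_square mult_mono)
  show ?thesis unfolding prim_circ_def by (simp add: field_simps) (use h3 in algebra)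
qed

lemma prim_lin_at_break: "prim_lin c (sqrt 3/2*t) / sqrt 3 = sqrt 3*c^2*t^2/8 - c*t^3/4 + 3 * sqrt 3*t^4/64"
proof -
  have s3: "sqrt 3 * sqrt 3 = 3" by simp
  show ?thesis unfolding prim_lin_def
    by (simp add: field_simps power2_eq_square power3_eq_cube power4_eq_xxxx) (simp add: mult.assoc[symmetric])
qed

text \<open>The integrand of the slice integral: (c - a)^2 times the sector width at a.  The
  minimum switches from the straight edge to the circle at a = (sqrt 3/2) t.\<close>
definition slice_profile :: "real \<Rightarrow> real \<Rightarrow> real \<Rightarrow> real" where
  "slice_profile c t a = (c - a)^2 * min (a / sqrt 3) (sqrt (t^2 - a^2))"

lemma slice_profile_below: assumes "0 \<le> a" "a \<le> sqrt 3/2*t"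
  shows "slice_profile c t a = (c - a)^2 * (a / sqrt 3)"
proof -
  have "a^2 \<le> (sqrt 3/2*t)^2" using assms by (intro power_mono) auto
  then have "(a / sqrt 3)^2 \<le> t^2 - a^2" by (simp add: power_divide field_simps power_mult_distrib)
  then have "a / sqrt 3 \<le> sqrt (t^2 - a^2)" by (rule real_le_rsqrt)
  then show ?thesis unfolding slice_profile_def by simp
qed

lemma slice_profile_above: assumes "0 < t" "sqrt 3/2*t \<le> a"
  shows "slice_profile c t a = (c - a)^2 * sqrt (t^2 - a^2)"
proof -
  have k: "0 \<le> sqrt 3/2*t" using assms by simp
  then have "0 \<le> a" using assms by linarith
  have "(sqrt 3/2*t)^2 \<le> a^2" using assms k by (intro power_mono) auto
  then have "t^2 - a^2 \<le> (a / sqrt 3)^2" by (simp add: power_divide field_simps power_mult_distrib)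
  then have "sqrt (t^2 - a^2) \<le> sqrt ((a / sqrt 3)^2)" by (rule real_sqrt_le_mono)
  also have "\<dots> = a / sqrt 3" using \<open>0 \<le> a\<close> by simp
  finally show ?thesis unfolding slice_profile_def by simp
qed

lemma slice_profile_nonneg: "0 \<le> a \<Longrightarrow> a \<le> t \<Longrightarrow> 0 \<le> slice_profile c t a"
  unfolding slice_profile_def by (auto intro: power_mono)

text \<open>The closed form of the integral of slice_profile c t over [0, min c t], in its three
  regimes t <= c, c < t < 2c/sqrt 3 and t >= 2c/sqrt 3 (where the disc covers the sector).\<close>
definition slice_int_near :: "real \<Rightarrow> real \<Rightarrow> real" where
  "slice_int_near c t = pi*c^2*t^2/12 - c*t^3/3 + (sqrt 3/32 + pi/48)*t^4"

definition slice_int_far :: "real \<Rightarrow> real \<Rightarrow> real" where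
  "slice_int_far c t = - pi*c^2*t^2/6 - c*t^3/3 + (sqrt 3/32 - pi/24)*t^4
        + (c^2*t^2/2 + t^4/8) * arcsin (c/t) + c * sqrt (t^2 - c^2) * (c^2/12 + 13*t^2/24)"

definition slice_int :: "real \<Rightarrow> real \<Rightarrow> real" where
  "slice_int c t = (if t \<le> c then slice_int_near c t
                    else if t < 2*c/sqrt 3 then slice_int_far c t else c^4/(12* sqrt 3))"

lemma slice_profile_integral: assumes c: "0 < c" and t: "0 < t"
  shows "(slice_profile c t has_integral slice_int c t) {0..min c t}"
proof -
  define k where "k = sqrt 3/2*t"
  have k0: "0 \<le> k" "k \<le> t" using t by (auto simp: k_def) (smt (verit) real_sqrt_le_iff real_sqrt_four)
  have lower: "(slice_profile c t has_integral prim_lin c b / sqrt 3) {0..b}" if "0 \<le> b" "b \<le> k" for b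
    using integral_prim_lin[OF that(1), of c]
    by (rule has_integral_eq[rotated]) (use that in \<open>simp add: slice_profile_below k_def\<close>)
  have upper: "(slice_profile c t has_integral prim_circ c t b - prim_circ c t k) {k..b}"
    if "k \<le> b" "b \<le> t" for b
  proof -
    have "-t \<le> k" using k0 t by linarith
    from integral_prim_circ[OF t this that, of c] show ?thesis
      by (rule has_integral_eq[rotated]) (use slice_profile_above[OF t] k_def in auto)
  qed
  consider "t \<le> c" | "c < t" "t < 2*c/sqrt 3" | "c < t" "2*c/sqrt 3 \<le> t" by linarith
  then show ?thesis
  proof cases
    case 1
    have "(slice_profile c t has_integral prim_lin c k / sqrt 3 + (prim_circ c t t - prim_circ c t k)) {0..t}"
      by (rule has_integral_combine[OF k0 lower upper]) (use k0 in auto)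
    moreover have "prim_lin c k / sqrt 3 + (prim_circ c t t - prim_circ c t k) = slice_int c t"
      unfolding k_def prim_lin_at_break prim_circ_at_break[OF t] prim_circ_at_radius[OF t]
        slice_int_def slice_int_near_def using 1
      by (simp add: field_simps)
    ultimately show ?thesis using 1 by simp
  next
    case 2
    have kc: "k \<le> c" using 2 unfolding k_def by (simp add: field_simps)
    have "(slice_profile c t has_integral prim_lin c k / sqrt 3 + (prim_circ c t c - prim_circ c t k)) {0..c}"
      by (rule has_integral_combine[OF k0(1) kc lower upper]) (use k0 2 kc in auto)
    moreover have "prim_lin c k / sqrt 3 + (prim_circ c t c - prim_circ c t k) = slice_int c t"
      unfolding k_def prim_lin_at_break prim_circ_at_break[OF t] prim_circ_at_c[OF c less_imp_le[OF 2(1)]]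
        slice_int_def slice_int_far_def using 2
      by (simp add: field_simps)
    ultimately show ?thesis using 2 by simp
  next
    case 3
    have kc: "c \<le> k" using 3 unfolding k_def by (simp add: field_simps)
    have "(slice_profile c t has_integral prim_lin c c / sqrt 3) {0..c}"
      using lower[OF less_imp_le[OF c] kc] .
    moreover have "prim_lin c c / sqrt 3 = slice_int c t" unfolding slice_int_def prim_lin_def using 3
      by (simp add: field_simps power4_eq_xxxx power3_eq_cube power2_eq_square)
    ultimately show ?thesis using 3 by simp
  qed
qed


section \<open>The distribution function of the distance\<close>

lemma sector_width_nonpos: assumes "x \<le> 0" shows "sector_width x a = 0"
proof (cases "\<bar>a\<bar> \<le> x")
  case True
  then have "a = 0" "x = 0" using assms by auto
  then show ?thesis by (simp add: sector_width_def)
qed (simp add: sector_width_def)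

lemma nn_integral_lborel_even:
  fixes f :: "real \<Rightarrow> real"
  assumes [measurable]: "f \<in> borel_measurable borel" and f0: "f 0 = 0"
  shows "(\<integral>\<^sup>+a. ennreal (f \<bar>a\<bar>) \<partial>lborel) = 2 * (\<integral>\<^sup>+a. ennreal (indicator {0..} a * f a) \<partial>lborel)"
proof -
  have "(\<integral>\<^sup>+a. ennreal (f \<bar>a\<bar>) \<partial>lborel)
      = (\<integral>\<^sup>+a. ennreal (f \<bar>a\<bar>) * indicator {..0} a + ennreal (f \<bar>a\<bar>) * indicator {0<..} a \<partial>lborel)"
    by (intro nn_integral_cong) (auto simp: indicator_def)
  also have "\<dots> = (\<integral>\<^sup>+a. ennreal (f \<bar>a\<bar>) * indicator {..0} a \<partial>lborel)
                 + (\<integral>\<^sup>+a. ennreal (f \<bar>a\<bar>) * indicator {0<..} a \<partial>lborel)"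
    by (rule nn_integral_add) measurable
  also have "(\<integral>\<^sup>+a. ennreal (f \<bar>a\<bar>) * indicator {..0} a \<partial>lborel)
           = (\<integral>\<^sup>+a. ennreal (indicator {0..} a * f a) \<partial>lborel)"
  proof -
    have "(\<integral>\<^sup>+a. ennreal (f \<bar>a\<bar>) * indicator {..0} a \<partial>lborel)
        = (\<integral>\<^sup>+a. ennreal (f \<bar>0 + -1 * a\<bar>) * indicator {..0} (0 + -1 * a) \<partial>lborel)"
      using nn_integral_real_affine[of "\<lambda>a. ennreal (f \<bar>a\<bar>) * indicator {..0} a" "-1" 0] by simp
    also have "\<dots> = (\<integral>\<^sup>+a. ennreal (indicator {0..} a * f a) \<partial>lborel)"
      by (intro nn_integral_cong) (auto simp: indicator_def)
    finally show ?thesis .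
  qed
  also have "(\<integral>\<^sup>+a. ennreal (f \<bar>a\<bar>) * indicator {0<..} a \<partial>lborel)
           = (\<integral>\<^sup>+a. ennreal (indicator {0..} a * f a) \<partial>lborel)"
    by (intro nn_integral_cong) (auto simp: indicator_def f0)
  finally show ?thesis by (simp add: mult_2)
qed

lemma nn_integral_sector_profile:
  fixes c x :: real assumes c: "0 < c" and x: "0 < x"
  shows "(\<integral>\<^sup>+a. ennreal ((max 0 (c - \<bar>a\<bar>))^2 / sqrt 3 * (2 * sector_width x a)) \<partial>lborel)
       = ennreal (4 / sqrt 3 * slice_int c x)"
proof -
  let ?f = "\<lambda>a. (max 0 (c - a))^2 / sqrt 3 * (2 * sector_width x a)"
  have "(\<integral>\<^sup>+a. ennreal ((max 0 (c - \<bar>a\<bar>))^2 / sqrt 3 * (2 * sector_width x a)) \<partial>lborel)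
      = (\<integral>\<^sup>+a. ennreal (?f \<bar>a\<bar>) \<partial>lborel)"
    by simp
  also have "\<dots> = 2 * (\<integral>\<^sup>+a. ennreal (indicator {0..} a * ?f a) \<partial>lborel)"
    by (rule nn_integral_lborel_even) (use x in \<open>simp_all add: sector_width_def\<close>)
  also have "(\<integral>\<^sup>+a. ennreal (indicator {0..} a * ?f a) \<partial>lborel)
           = (\<integral>\<^sup>+a. ennreal (indicator {0..min c x} a * (2 / sqrt 3 * slice_profile c x a)) \<partial>lborel)"
  proof (rule nn_integral_cong)
    fix a :: real
    have "indicator {0..} a * ?f a = indicator {0..min c x} a * (2 / sqrt 3 * slice_profile c x a)"
      by (cases "0 \<le> a"; cases "a \<le> c"; cases "a \<le> x")
         (auto simp: indicator_def sector_width_def slice_profile_def)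
    then show "ennreal (indicator {0..} a * ?f a)
             = ennreal (indicator {0..min c x} a * (2 / sqrt 3 * slice_profile c x a))"
      by (rule arg_cong[of _ _ ennreal])
  qed
  also have "\<dots> = ennreal (2 / sqrt 3 * slice_int c x)"
  proof (rule nn_integral_has_integral_lebesgue)
    show "((\<lambda>a. 2 / sqrt 3 * slice_profile c x a) has_integral 2 / sqrt 3 * slice_int c x) {0..min c x}"
      using slice_profile_integral[OF c x] by (rule has_integral_mult_right)
    fix a assume "a \<in> {0..min c x}"
    then show "0 \<le> 2 / sqrt 3 * slice_profile c x a" using slice_profile_nonneg[of a x c] by auto
  qed
  also have "2 * ennreal (2 / sqrt 3 * slice_int c x) = ennreal (4 / sqrt 3 * slice_int c x)"
  proof -
    have "ennreal (4 / sqrt 3 * slice_int c x) = ennreal (2 * (2 / sqrt 3 * slice_int c x))" by simp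
    also have "\<dots> = ennreal 2 * ennreal (2 / sqrt 3 * slice_int c x)" by (rule ennreal_mult') simp
    finally show ?thesis by simp
  qed
  finally show ?thesis .
qed

lemma slice_int_nonneg: "0 < c \<Longrightarrow> 0 < x \<Longrightarrow> 0 \<le> slice_int c x"
  using has_integral_nonneg[OF slice_profile_integral, of c x] slice_profile_nonneg by force

definition tri3_cdf :: "real \<Rightarrow> real \<Rightarrow> real" where
  "tri3_cdf r x = (if x \<le> 0 then 0 else 12 * sqrt 3 / (3*r/2)^4 * slice_int (3*r/2) x)"

lemma tri3_cdf_nonneg: "0 < r \<Longrightarrow> 0 \<le> tri3_cdf r x"
  unfolding tri3_cdf_def using slice_int_nonneg[of "3*r/2" x] by simp

lemma emeasure_tri3_dist_le:
  assumes r: "0 < r"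
  shows "emeasure (tri3_pair_space r) {\<omega>. dist (fst \<omega>) (snd \<omega>) \<le> x} = ennreal (tri3_cdf r x)"
proof -
  define c where "c = 3*r/2"
  define A where "A = c^2 / sqrt 3"
  have c: "0 < c" using r by (simp add: c_def)
  have A: "emeasure lborel (tri3 r) = ennreal A" "0 < A"
    using emeasure_tri3[OF r] c by (auto simp: A_def c_def)
  let ?I = "\<integral>\<^sup>+a. ennreal ((max 0 (c - \<bar>a\<bar>))^2 / sqrt 3 * (2 * sector_width x a)) \<partial>lborel"
  have "emeasure (tri3_pair_space r) {\<omega>. dist (fst \<omega>) (snd \<omega>) \<le> x}
     = ennreal (1/A^2) * (\<integral>\<^sup>+h. indicator {h. norm h \<le> x} h * ennreal (tri3_cov r h) \<partial>lborel)"
    unfolding tri3_pair_space_def uniform_pair_dist_le[OF tri3_sets[OF r, unfolded sets_lborel] A]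
    by (simp add: covariogram_tri3[OF r])
  also have "(\<integral>\<^sup>+h. indicator {h. norm h \<le> x} h * ennreal (tri3_cov r h) \<partial>lborel)
      = 3 * (\<integral>\<^sup>+h. indicator {h. norm h \<le> x} h * ennreal (tri3_cov r h) * indicator sector1 h \<partial>lborel)"
    by (rule nn_integral_rot120_invariant) (simp_all add: tri3_cov_rot120 indicator_def)
  also have "\<dots> = 3 * ?I"
    by (simp add: nn_integral_sector1 c_def)
  finally have eq: "emeasure (tri3_pair_space r) {\<omega>. dist (fst \<omega>) (snd \<omega>) \<le> x}
      = ennreal (1/A^2) * (3 * ?I)" .
  show ?thesis
  proof (cases "0 < x")
    case True
    define y where "y = 4 / sqrt 3 * slice_int c x"
    have y: "0 \<le> y" using slice_int_nonneg[OF c True] by (simp add: y_def)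
    have "3 * ennreal y = ennreal (3 * y)" using ennreal_mult'[of 3 y] by simp
    moreover have "ennreal (1/A^2) * ennreal (3 * y) = ennreal (1/A^2 * (3 * y))"
      by (rule ennreal_mult[symmetric]) (use y in auto)
    ultimately have "ennreal (1/A^2) * (3 * ennreal (4 / sqrt 3 * slice_int c x))
        = ennreal (1/A^2 * (3 * (4 / sqrt 3 * slice_int c x)))"
      by (simp add: y_def)
    also have "1/A^2 * (3 * (4 / sqrt 3 * slice_int c x)) = tri3_cdf r x"
      unfolding tri3_cdf_def A_def c_def[symmetric] using True c
      by (simp add: field_simps power2_eq_square power4_eq_xxxx)
    finally show ?thesis unfolding eq nn_integral_sector_profile[OF c True] .
  next
    case False
    then show ?thesis unfolding eq by (simp add: sector_width_nonpos tri3_cdf_def)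
  qed
qed

lemma tri3_cdf_mono: assumes r: "0 < r" and xy: "x \<le> y" shows "tri3_cdf r x \<le> tri3_cdf r y"
proof -
  have "{\<omega> \<in> space (tri3_pair_space r). dist (fst \<omega>) (snd \<omega>) \<le> y} \<in> sets (tri3_pair_space r)"
    unfolding tri3_pair_space_def by measurable
  then have "emeasure (tri3_pair_space r) {\<omega>. dist (fst \<omega>) (snd \<omega>) \<le> x}
           \<le> emeasure (tri3_pair_space r) {\<omega>. dist (fst \<omega>) (snd \<omega>) \<le> y}"
    using xy by (intro emeasure_mono) (auto simp: tri3_pair_space_def space_pair_measure)
  then show ?thesis using tri3_cdf_nonneg[OF r] by (simp add: emeasure_tri3_dist_le[OF r])
qed

section \<open>The density\<close>

lemma sqrt3_gt: "3/2 < sqrt 3"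
  by (rule real_less_rsqrt) (simp add: power2_eq_square)

lemma sqrt3_mult: "sqrt 3 * (sqrt 3 * x) = 3 * x"
  by (simp add: mult.assoc[symmetric])

definition tri3_cdf_near :: "real \<Rightarrow> real \<Rightarrow> real" where
  "tri3_cdf_near r t = 12 * sqrt 3 / (3*r/2)^4 * slice_int_near (3*r/2) t"

definition tri3_cdf_far :: "real \<Rightarrow> real \<Rightarrow> real" where
  "tri3_cdf_far r t = 12 * sqrt 3 / (3*r/2)^4 * slice_int_far (3*r/2) t"

lemma tri3_side: "2 * (3*r/2) / sqrt 3 = sqrt 3 * r"
  by (simp add: field_simps)

lemma tri3_cdf_far_start: "0 < r \<Longrightarrow> tri3_cdf_far r (3*r/2) = tri3_cdf_near r (3*r/2)"
  unfolding tri3_cdf_far_def tri3_cdf_near_def slice_int_far_def slice_int_near_def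
  by (simp add: field_simps)

lemma tri3_cdf_far_end: assumes "0 < r" shows "tri3_cdf_far r (sqrt 3 * r) = 1"
proof -
  have "3*r/2/(sqrt 3 * r) = sqrt 3/2" using assms by (simp add: field_simps)
  then have a: "arcsin (3*r/2/(sqrt 3 * r)) = pi/3" using arcsin_sqrt3_half by metis
  have "(sqrt 3 * r)^2 - (3*r/2)^2 = (sqrt 3 * r / 2)^2" by (simp add: power2_eq_square field_simps)
  then have b: "sqrt ((sqrt 3 * r)^2 - (3*r/2)^2) = sqrt 3 * r/2" using assms by simp
  show ?thesis unfolding tri3_cdf_far_def slice_int_far_def a b using assms
    by (simp add: field_simps) (simp add: power2_eq_square power3_eq_cube power4_eq_xxxx)
qed

lemma tri3_cdf_eq_near: "0 < r \<Longrightarrow> 0 \<le> x \<Longrightarrow> x \<le> 3*r/2 \<Longrightarrow> tri3_cdf r x = tri3_cdf_near r x"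
  unfolding tri3_cdf_def tri3_cdf_near_def slice_int_def by (auto simp: slice_int_near_def)

lemma tri3_cdf_eq_one: assumes r: "0 < r" and x: "sqrt 3 * r \<le> x" shows "tri3_cdf r x = 1"
proof -
  have "3*r/2 < sqrt 3 * r" "0 < sqrt 3 * r" using sqrt3_gt r by simp_all
  then have "0 < x" "\<not> x \<le> 3*r/2" using x by linarith+
  then show ?thesis using r x unfolding tri3_cdf_def slice_int_def tri3_side
    by (simp add: field_simps)
qed

lemma tri3_cdf_eq_far:
  assumes r: "0 < r" and x: "3*r/2 \<le> x" "x \<le> sqrt 3 * r"
  shows "tri3_cdf r x = tri3_cdf_far r x"
proof -
  consider "x = 3*r/2" | "3*r/2 < x" "x < sqrt 3 * r" | "x = sqrt 3 * r" using x by linarith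
  then show ?thesis
  proof cases
    case 1
    show ?thesis
      unfolding 1 using tri3_cdf_eq_near[OF r, of "3*r/2"] tri3_cdf_far_start[OF r] r by simp
  next
    case 2
    then show ?thesis using r unfolding tri3_cdf_def tri3_cdf_far_def slice_int_def tri3_side by simp
  next
    case 3
    then show ?thesis using tri3_cdf_eq_one[OF r] tri3_cdf_far_end[OF r] by simp
  qed
qed

lemma tri3_cdf_near_deriv:
  assumes r: "0 < r" and t: "0 < t" "t < 3*r/2"
  shows "(tri3_cdf_near r has_real_derivative tri3_density r t) (at t)"
proof -
  have "3/2*r < sqrt 3 * r" using sqrt3_gt r by (intro mult_strict_right_mono) auto
  then have tr: "t < sqrt 3 * r" using t by linarith
  have "(tri3_cdf_near r has_real_derivative 12 * sqrt 3/(3*r/2)^4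
          * (pi*(3*r/2)^2*t/6 - (3*r/2)*t^2 + (sqrt 3/8 + pi/12)*t^3)) (at t)"
    unfolding tri3_cdf_near_def slice_int_near_def
    apply (rule derivative_eq_intros refl | (simp; fail))+
    using r by (simp add: field_simps)
  moreover have "12 * sqrt 3/(3*r/2)^4 * (pi*(3*r/2)^2*t/6 - (3*r/2)*t^2 + (sqrt 3/8 + pi/12)*t^3)
                 = tri3_density r t"
    unfolding tri3_density_def tri3_phi_def tri3_area_def tri3_perimeter_def using t tr r
    apply (simp add: field_simps)
    apply (simp add: sqrt3_mult)
    by algebra
  ultimately show ?thesis by simp
qed

lemma tri3_cdf_far_deriv:
  assumes r: "0 < r" and t: "3*r/2 < t" "t < sqrt 3 * r"
  shows "(tri3_cdf_far r has_real_derivative tri3_density r t) (at t)"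
proof -
  define c where "c = 3*r/2"
  have c: "0 < c" "c < t" using r t by (auto simp: c_def)
  have lt: "c^2 < t^2" using c by (intro power_strict_mono) auto
  define S where "S = (\<lambda>t. sqrt (t^2 - c^2))"
  define AS where "AS = (\<lambda>t. arcsin (c/t))"
  have Sp: "S t > 0" "(S t)^2 = t^2 - c^2" using lt by (simp_all add: S_def)
  have e: "sqrt (1 - (c/t)^2) = S t/t"
  proof -
    have "1 - (c/t)^2 = (t^2 - c^2)/t^2" using c by (simp add: field_simps power2_eq_square)
    then show ?thesis using c by (simp add: real_sqrt_divide S_def)
  qed
  have d1: "(S has_real_derivative (t / S t)) (at t)"
    unfolding S_def using lt by (auto intro!: derivative_eq_intros simp: field_simps)
  have d2: "(AS has_real_derivative (-c / (t * S t))) (at t)"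
  proof -
    have ct1: "-1 < c/t" "c/t < 1" using c by (auto simp: field_simps)
    have "((\<lambda>t. arcsin (c/t)) has_real_derivative inverse (sqrt (1 - (c/t)^2)) * (-c/t^2)) (at t)"
      by (rule DERIV_chain2[OF DERIV_arcsin])
         (use ct1 c in \<open>auto intro!: derivative_eq_intros simp: power2_eq_square\<close>)
    moreover have "inverse (sqrt (1 - (c/t)^2)) * (-c/t^2) = -c / (t * S t)"
      using e c Sp by (simp add: field_simps power2_eq_square)
    ultimately show ?thesis by (simp add: AS_def)
  qed
  have far: "tri3_cdf_far r = (\<lambda>t. 12 * sqrt 3/c^4 * (- pi*c^2*t^2/6 - c*t^3/3 + (sqrt 3/32 - pi/24)*t^4
        + (c^2*t^2/2 + t^4/8) * AS t + c * S t * (c^2/12 + 13*t^2/24)))"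
    by (simp add: fun_eq_iff tri3_cdf_far_def slice_int_far_def c_def S_def AS_def)
  have "(tri3_cdf_far r has_real_derivative 12 * sqrt 3/c^4 * (- pi*c^2*t/3 - c*t^2 + (sqrt 3/8 - pi/6)*t^3
          + (c^2*t + t^3/2) * AS t + 3/2*c*t * S t)) (at t)"
    unfolding far
    apply (rule derivative_eq_intros d1 d2 refl | (simp; fail))+
    using Sp c apply (simp add: field_simps power2_eq_square power3_eq_cube)
    by algebra
  moreover have "12 * sqrt 3/c^4 * (- pi*c^2*t/3 - c*t^2 + (sqrt 3/8 - pi/6)*t^3
          + (c^2*t + t^3/2) * AS t + 3/2*c*t * S t) = tri3_density r t"
  proof -
    have e1: "t * sqrt (1 - (3*r/(2*t))^2) = S t" using e c unfolding c_def by (simp add: field_simps)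
    have e2: "arcsin (3*r/(2*t)) = AS t" unfolding AS_def c_def by (simp add: field_simps)
    have rr: "r = 2*c/3" unfolding c_def by simp
    have "\<not> t < 3*r/2" using t by simp
    then show ?thesis
      unfolding tri3_density_def tri3_phi_def tri3_area_def tri3_perimeter_def using t r
      apply (simp add: e1 e2)
      unfolding rr using c apply (simp add: field_simps)
      apply (simp add: sqrt3_mult)
      by algebra
  qed
  ultimately show ?thesis by simp
qed

lemma tri3_density_integral:
  assumes r: "0 < r" and x: "0 \<le> x"
  shows "(tri3_density r has_integral tri3_cdf r x) {0..x}"
proof -
  have cr: "3*r/2 \<le> sqrt 3 * r" using sqrt3_gt r by simp
  have near: "(tri3_density r has_integral tri3_cdf r b) {0..b}" if b: "0 \<le> b" "b \<le> 3*r/2" for b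
  proof -
    have "(tri3_density r has_integral tri3_cdf_near r b - tri3_cdf_near r 0) {0..b}"
    proof (rule fundamental_theorem_of_calculus_interior)
      show "continuous_on {0..b} (tri3_cdf_near r)"
        unfolding tri3_cdf_near_def slice_int_near_def by (intro continuous_intros) auto
      fix t assume "t \<in> {0<..<b}"
      then show "(tri3_cdf_near r has_vector_derivative tri3_density r t) (at t)"
        using tri3_cdf_near_deriv[OF r, of t] b
        by (simp add: has_real_derivative_iff_has_vector_derivative)
    qed (use b in auto)
    then show ?thesis
      using b r by (simp add: tri3_cdf_eq_near tri3_cdf_near_def slice_int_near_def)
  qed
  have far: "(tri3_density r has_integral tri3_cdf r b) {0..b}" if b: "3*r/2 \<le> b" "b \<le> sqrt 3 * r" for b
  proof -
    have "(tri3_density r has_integral tri3_cdf_far r b - tri3_cdf_far r (3*r/2)) {3*r/2..b}"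
    proof (rule fundamental_theorem_of_calculus_interior)
      show "continuous_on {3*r/2..b} (tri3_cdf_far r)"
        unfolding tri3_cdf_far_def slice_int_far_def using r
        by (intro continuous_intros) (auto simp: field_simps)
      fix t assume "t \<in> {3*r/2<..<b}"
      then show "(tri3_cdf_far r has_vector_derivative tri3_density r t) (at t)"
        using tri3_cdf_far_deriv[OF r, of t] b
        by (simp add: has_real_derivative_iff_has_vector_derivative)
    qed (use b in auto)
    then have "(tri3_density r has_integral tri3_cdf r (3*r/2) + (tri3_cdf_far r b - tri3_cdf_far r (3*r/2))) {0..b}"
      using near[of "3*r/2"] r b by (intro has_integral_combine[of 0 "3*r/2" b]) auto
    then show ?thesis using r b cr by (simp add: tri3_cdf_eq_far)
  qed
  show ?thesis
  proof (cases "x \<le> sqrt 3 * r")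
    case True
    then show ?thesis using near far x by (cases "x \<le> 3*r/2") auto
  next
    case False
    have "(tri3_density r has_integral 0) {sqrt 3 * r..x}"
      using has_integral_0[of "{sqrt 3 * r..x}"]
      by (rule has_integral_eq[rotated]) (auto simp: tri3_density_def)
    then have "(tri3_density r has_integral tri3_cdf r (sqrt 3 * r) + 0) {0..x}"
      using far[OF cr order_refl] r False by (intro has_integral_combine[of 0 "sqrt 3 * r" x]) auto
    then show ?thesis using False r by (simp add: tri3_cdf_eq_one)
  qed
qed

lemma mono_has_real_derivative_nonneg:
  fixes f :: "real \<Rightarrow> real"
  assumes mono: "\<And>x y. x \<le> y \<Longrightarrow> f x \<le> f y" and d: "(f has_real_derivative D) (at t)"
  shows "0 \<le> D"
proof (rule ccontr)
  assume "\<not> 0 \<le> D"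
  then obtain e where e: "e > 0" "\<forall>h>0. h < e \<longrightarrow> f t > f (t + h)"
    using DERIV_neg_dec_right[OF d] by force
  then have "f t > f (t + e/2)" by auto
  moreover have "f t \<le> f (t + e/2)" using mono e by auto
  ultimately show False by simp
qed

lemma tri3_density_at_break: assumes r: "0 < r" shows "0 \<le> tri3_density r (3*r/2)"
proof -
  have cr: "3*r/2 < sqrt 3 * r" using sqrt3_gt r by simp
  have one: "3*r/(2*(3*r/2)) = 1" using r by simp
  have eq: "tri3_density r (3*r/2) = 4/(sqrt 3 * r) * (3/2*pi + 3 * sqrt 3/4 - 6)"
    unfolding tri3_density_def tri3_phi_def tri3_area_def tri3_perimeter_def one
    using r cr by (simp add: field_simps power2_eq_square)
  have p: "3.14 \<le> pi" using pi_approx by simp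
  have s: "1.73 \<le> sqrt 3" by (rule real_le_rsqrt) (simp add: power2_eq_square)
  have "0 \<le> 3/2*pi + 3 * sqrt 3/4 - 6" using p s by simp
  then show ?thesis unfolding eq using r by simp
qed

text \<open>Non-negativity of the density: away from the break point it is the derivative of the
  monotone function tri3_cdf; at the break point it is checked numerically.\<close>
lemma tri3_density_nonneg: assumes r: "0 < r" shows "0 \<le> tri3_density r t"
proof -
  note mono = tri3_cdf_mono[OF r]
  consider "t \<le> 0 \<or> sqrt 3 * r \<le> t" | "0 < t" "t < 3*r/2" | "t = 3*r/2" | "3*r/2 < t" "t < sqrt 3 * r"
    by linarith
  then show ?thesis
  proof cases
    case 1 then show ?thesis unfolding tri3_density_def by auto
  next
    case 2
    have "(tri3_cdf r has_real_derivative tri3_density r t) (at t)"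
    proof (rule has_field_derivative_transform_within_open[OF tri3_cdf_near_deriv[OF r 2]])
      show "open {0<..<3*r/2}" "t \<in> {0<..<3*r/2}" using 2 by simp_all
    qed (simp add: tri3_cdf_eq_near[OF r])
    from mono_has_real_derivative_nonneg[of "tri3_cdf r", OF mono this] show ?thesis .
  next
    case 3
    show ?thesis unfolding 3 by (rule tri3_density_at_break[OF r])
  next
    case 4
    have "(tri3_cdf r has_real_derivative tri3_density r t) (at t)"
    proof (rule has_field_derivative_transform_within_open[OF tri3_cdf_far_deriv[OF r 4]])
      show "open {3*r/2<..<sqrt 3 * r}" "t \<in> {3*r/2<..<sqrt 3 * r}" using 4 by simp_all
    qed (simp add: tri3_cdf_eq_far[OF r])
    from mono_has_real_derivative_nonneg[of "tri3_cdf r", OF mono this] show ?thesis .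
  qed
qed

lemma measurable_arcsin_clamped [measurable]:
  assumes "f \<in> borel_measurable M"
  shows "(\<lambda>x. arcsin (max (-1) (min 1 (f x)))) \<in> borel_measurable M"
proof -
  have "(\<lambda>z::real. arcsin (max (-1) (min 1 z))) \<in> borel_measurable borel"
    by (intro borel_measurable_continuous_onI continuous_intros) auto
  from measurable_compose[OF assms this] show ?thesis by simp
qed

text \<open>Beyond 3r/2 the argument of arcsin in the density lies in [0, 1], so it may be clamped.\<close>
lemma tri3_density_measurable:
  assumes r: "0 < r" shows "(\<lambda>t. ennreal (tri3_density r t)) \<in> borel_measurable lborel"
proof -
  have eq: "tri3_density r t = (if 0 \<le> t \<and> t < sqrt 3 * r then
        2*t / tri3_area r * (pi + tri3_perimeter r / tri3_area r *
        ((if t < 3*r/2 then (3 * sqrt 3 + 2*pi) * t^2 / (36 * r)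
      else 3/2 * (t * sqrt (1 - (3*r/(2*t))^2) - pi*r/2)
           + (1/(4 * sqrt 3) - pi/9) * t^2 / r
           + (3*r/2 + t^2/(3*r)) * arcsin (max (-1) (min 1 (3*r/(2*t))))) - t))
      else 0)" for t
  proof (cases "t < 3*r/2")
    case False
    then have "0 < t" using r by linarith
    then have "3*r/(2*t) \<le> 1" "0 \<le> 3*r/(2*t)" using False r by (auto simp: field_simps)
    then have "max (-1) (min 1 (3*r/(2*t))) = 3*r/(2*t)" by simp
    then show ?thesis unfolding tri3_density_def tri3_phi_def using False by simp
  qed (simp add: tri3_density_def tri3_phi_def)
  show ?thesis unfolding eq by measurable
qed

lemma nn_integral_tri3_density_le:
  assumes r: "0 < r"
  shows "(\<integral>\<^sup>+t. ennreal (tri3_density r t) * indicator {..x} t \<partial>lborel) = ennreal (tri3_cdf r x)"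
proof (cases "0 \<le> x")
  case True
  have "(\<integral>\<^sup>+t. ennreal (tri3_density r t) * indicator {..x} t \<partial>lborel)
      = (\<integral>\<^sup>+t. ennreal (indicator {0..x} t * tri3_density r t) \<partial>lborel)"
    by (intro nn_integral_cong) (auto simp: indicator_def tri3_density_def)
  also have "\<dots> = ennreal (tri3_cdf r x)"
    by (rule nn_integral_has_integral_lebesgue[OF _ tri3_density_integral[OF r True]])
       (rule tri3_density_nonneg[OF r])
  finally show ?thesis .
next
  case False
  then have "(\<lambda>t. ennreal (tri3_density r t) * indicator {..x} t) = (\<lambda>t. 0)"
    by (auto simp: indicator_def tri3_density_def fun_eq_iff)
  then show ?thesis using False by (simp add: tri3_cdf_def)
qed

lemma tri3_density_real_distribution:
  assumes r: "0 < r" shows "real_distribution (density lborel (\<lambda>t. ennreal (tri3_density r t)))"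
proof -
  have [measurable]: "(\<lambda>t. ennreal (tri3_density r t)) \<in> borel_measurable lborel"
    by (rule tri3_density_measurable[OF r])
  have "emeasure (density lborel (\<lambda>t. ennreal (tri3_density r t))) UNIV
      = (\<integral>\<^sup>+t. ennreal (tri3_density r t) \<partial>lborel)"
    by (subst emeasure_density) auto
  also have "\<dots> = (\<integral>\<^sup>+t. ennreal (tri3_density r t) * indicator {..sqrt 3 * r} t \<partial>lborel)"
    by (intro nn_integral_cong) (auto simp: indicator_def tri3_density_def)
  also have "\<dots> = 1" using r sqrt3_gt by (simp add: nn_integral_tri3_density_le tri3_cdf_eq_one)
  finally show ?thesis
    unfolding real_distribution_def real_distribution_axioms_def by (auto intro!: prob_spaceI)
qed

lemma tri3_distance_real_distribution:
  assumes r: "0 < r"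
  shows "real_distribution (distr (tri3_pair_space r) lborel (\<lambda>(p, q). dist p q))"
proof -
  have [measurable]: "tri3 r \<in> sets borel" using tri3_sets[OF r] by simp
  have P: "prob_space (tri3_pair_space r)" unfolding tri3_pair_space_def
    by (intro prob_space_pair prob_space_uniform_measure) (use r in \<open>simp_all add: emeasure_tri3\<close>)
  have X: "(\<lambda>(p, q). dist p q :: real) \<in> measurable (tri3_pair_space r) lborel"
    unfolding tri3_pair_space_def by measurable
  show ?thesis
    unfolding real_distribution_def real_distribution_axioms_def
    using prob_space.prob_space_distr[OF P X] by simp
qed

lemma cdf_tri3_distance:
  assumes r: "0 < r"
  shows "cdf (distr (tri3_pair_space r) lborel (\<lambda>(p, q). dist p q)) x = tri3_cdf r x"
proof -
  have [measurable]: "tri3 r \<in> sets borel" using tri3_sets[OF r] by simp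
  have "(\<lambda>(p, q). dist p q) -` {..x} \<inter> space (tri3_pair_space r) = {\<omega>. dist (fst \<omega>) (snd \<omega>) \<le> x}"
    by (auto simp: tri3_pair_space_def space_pair_measure)
  then have "cdf (distr (tri3_pair_space r) lborel (\<lambda>(p, q). dist p q)) x
           = measure (tri3_pair_space r) {\<omega>. dist (fst \<omega>) (snd \<omega>) \<le> x}"
    unfolding cdf_def2 by (subst measure_distr) (auto simp: tri3_pair_space_def)
  then show ?thesis
    unfolding measure_def emeasure_tri3_dist_le[OF r] using tri3_cdf_nonneg[OF r] by simp
qed

lemma cdf_tri3_density:
  assumes r: "0 < r"
  shows "cdf (density lborel (\<lambda>t. ennreal (tri3_density r t))) x = tri3_cdf r x"
  using tri3_density_measurable[OF r] tri3_cdf_nonneg[OF r]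
  unfolding cdf_def2 measure_def
  by (subst emeasure_density) (auto simp: nn_integral_tri3_density_le[OF r])

theorem mainTheorem5:
  fixes r :: real
  assumes "r > 0"
  shows "distributed (tri3_pair_space r) lborel (\<lambda>(p, q). dist p q)
           (\<lambda>t. ennreal (tri3_density r t))"
proof -
  have "distr (tri3_pair_space r) lborel (\<lambda>(p, q). dist p q)
      = density lborel (\<lambda>t. ennreal (tri3_density r t))"
    using assms
    by (intro cdf_unique tri3_distance_real_distribution tri3_density_real_distribution)
       (simp_all add: fun_eq_iff cdf_tri3_distance cdf_tri3_density)
  moreover have "(\<lambda>t. ennreal (tri3_density r t)) \<in> borel_measurable lborel"
    using tri3_density_measurable[OF assms] .
  moreover have "(\<lambda>(p, q). dist p q :: real) \<in> measurable (tri3_pair_space r) lborel"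
    using tri3_sets[OF assms] unfolding tri3_pair_space_def by measurable
  ultimately show ?thesis unfolding distributed_def by blast
qed

end
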